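(* Let $G_0$ be a fixed $n\times l$ binary matrix, $G_1$ a fixed $n\times k$ binary matrix, $\mathbf m\in\{0,1\}^k$ fixed, and let $t_0=\lfloor (d_0-1)/2\rfloor$. For every $u$ with $1\le u\le d_0+t_0$, $$P(E=0\mid U=u)=\frac12\cdot\frac{\sum_{w=d_0}^{u}B_{0,w}\binom{n-w}{u-w}}{\binom{n}{u}}.$$
   Context: All arithmetic is over $\mathrm{GF}(2)$. $\mathcal C_0^{\perp}=\{\mathbf x\in\{0,1\}^n: G_0^T\mathbf x=\mathbf 0\}$; $B_{0,w}$ is the number of vectors of Hamming weight $w$ in $\mathcal C_0^\perp$, and $d_0$ is the minimum Hamming weight of a nonzero vector of $\mathcal C_0^\perp$ (empty sums are $0$). Defect model: each of the $n$ memory cells is independently defective with probability $\beta\in(0,1)$; a defective cell is stuck at $0$ or at $1$, each with probability $1/2$, independently. Let $\mathcal U$ be the set of defect positions, $U=|\mathcal U|$, $\mathbf s^{\mathcal U}$ the vector of stuck-at values; conditionally on $U=u$, $\mathcal U$ is a uniform random $u$-subset and $\mathbf s^{\mathcal U}$ is uniform on $\{0,1\}^u$. For a matrix $M$ (resp. vector $\mathbf v$) with rows indexed by $\{1,\dots,n\}$, $M^{\mathcal U}$ (resp. $\mathbf v^{\mathcal U}$) denotes the rows indexed by $\mathcal U$. Encoding: with $\mathbf b^{\mathcal U}=(G_1\mathbf m)^{\mathcal U}+\mathbf s^{\mathcal U}$, look for $\mathbf d\in\{0,1\}^l$ with $G_0^{\mathcal U}\mathbf d=\mathbf b^{\mathcal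 U}$; $E=1$ if such $\mathbf d$ exists and $E=0$ (encoding failure) otherwise. *)

theory Defs
  imports "HOL-Probability.Probability" "HOL-Library.Z2"
begin

text \<open>Binary vectors of length n are functions nat => bit that vanish outside {0..<n};
  an n x l binary matrix is a function nat => nat => bit, entry (i,j) for i<n, j<l.\<close>

definition bvecs :: "nat \<Rightarrow> (nat \<Rightarrow> bit) set" where
  "bvecs n = {x. \<forall>i\<ge>n. x i = 0}"

definition hweight :: "nat \<Rightarrow> (nat \<Rightarrow> bit) \<Rightarrow> nat" where
  "hweight n x = card {i. i < n \<and> x i \<noteq> 0}"

definition dual_code :: "nat \<Rightarrow> nat \<Rightarrow> (nat \<Rightarrow> nat \<Rightarrow> bit) \<Rightarrow> (nat \<Rightarrow> bit) set" where
  "dual_code n l G0 = {x \<in> bvecs n. \<forall>j<l. (\<Sum>i<n. G0 i j * x i) = 0}"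

definition Bw :: "nat \<Rightarrow> nat \<Rightarrow> (nat \<Rightarrow> nat \<Rightarrow> bit) \<Rightarrow> nat \<Rightarrow> nat" where
  "Bw n l G0 w = card {x \<in> dual_code n l G0. hweight n x = w}"

definition dmin :: "nat \<Rightarrow> nat \<Rightarrow> (nat \<Rightarrow> nat \<Rightarrow> bit) \<Rightarrow> nat" where
  "dmin n l G0 = Min {hweight n x | x. x \<in> dual_code n l G0 \<and> x \<noteq> (\<lambda>_. 0)}"

text \<open>State of one cell: None = not defective, Some b = stuck at b.
  Defective with probability beta; stuck value uniform on {0,1}.\<close>
definition cell_pmf :: "real \<Rightarrow> bit option pmf" where
  "cell_pmf \<beta> = bind_pmf (bernoulli_pmf \<beta>)
     (\<lambda>dfct. if dfct then map_pmf Some (pmf_of_set (UNIV :: bit set)) else return_pmf None)"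

definition defect_pmf :: "nat \<Rightarrow> real \<Rightarrow> (nat \<Rightarrow> bit option) pmf" where
  "defect_pmf n \<beta> = Pi_pmf {0..<n} None (\<lambda>_. cell_pmf \<beta>)"

definition defects :: "(nat \<Rightarrow> bit option) \<Rightarrow> nat set" where
  "defects \<omega> = {i. \<omega> i \<noteq> None}"

text \<open>E = 1 iff some d in {0,1}^l satisfies G_0^U d = (G_1 m)^U + s^U.\<close>
definition encodable :: "nat \<Rightarrow> nat \<Rightarrow> (nat \<Rightarrow> nat \<Rightarrow> bit) \<Rightarrow> (nat \<Rightarrow> nat \<Rightarrow> bit)
    \<Rightarrow> (nat \<Rightarrow> bit) \<Rightarrow> (nat \<Rightarrow> bit option) \<Rightarrow> bool" where
  "encodable l k G0 G1 m \<omega> \<longleftrightarrow>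
     (\<exists>d \<in> bvecs l. \<forall>i \<in> defects \<omega>.
        (\<Sum>j<l. G0 i j * d j) = (\<Sum>j<k. G1 i j * m j) + the (\<omega> i))"

end

theory Submission
  imports Defs
begin

text \<open>Over GF(2) the system \<open>G\<^sub>0\<^sup>\<U> d = b\<^sup>\<U>\<close>
  is solvable iff \<open>b\<^sup>\<U>\<close> is orthogonal to every codeword of \<open>\<C>\<^sub>0\<^sup>\<bottom>\<close> supported in
  \<open>\<U>\<close>. Since \<open>u \<le> d\<^sub>0 + t\<^sub>0\<close>, at most one nonzero such codeword exists: two distinct
  ones \<open>x, y\<close> give a third one, \<open>x + y\<close>, supported in the symmetric difference, and the
  three weights, each at least \<open>d\<^sub>0\<close>, would add up to at most \<open>2u < 3d\<^sub>0\<close>. If it exists,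
  its inner product with \<open>b\<^sup>\<U>\<close> is 1 for exactly half of the \<open>2\<^sup>u\<close> stuck-at
  patterns; otherwise encoding never fails. A weight-\<open>w\<close> codeword lies inside
  \<open>(n - w choose u - w)\<close> of the \<open>u\<close>-subsets, and all defect configurations with \<open>U = u\<close>
  are equally likely.\<close>

text \<open>\<open>HOL-Library.Z2\<close> rewrites \<open>*\<close> and \<open>+\<close> on \<open>bit\<close> into \<open>AND\<close>/\<open>XOR\<close>; the ring
  form is needed for the summation lemmas.\<close>

declare mult_bit_eq_and [simp del] add_bit_eq_xor [simp del]

lemma bit_add_self [simp]: "(a::bit) + a = 0"
  by (cases a) simp_all

lemma bit_add_neq_0_iff: "(a::bit) + b \<noteq> 0 \<longleftrightarrow> (a \<noteq> 0) \<noteq> (b \<noteq> 0)"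
  by (cases a; cases b) simp_all

lemma bit_add_eq_iff: "(a::bit) + c = b \<longleftrightarrow> a = b + c"
  by (cases a; cases b; cases c) simp_all

lemma UNIV_bit: "(UNIV :: bit set) = {0, 1}"
proof -
  have "b \<in> {0, 1}" for b :: bit by (cases b) simp_all
  then show ?thesis by blast
qed

lemma finite_UNIV_bit [simp]: "finite (UNIV :: bit set)"
  by (simp add: UNIV_bit)

lemma card_UNIV_bit: "card (UNIV :: bit set) = 2"
  by (simp add: UNIV_bit)

definition solvable_rows :: "(nat \<Rightarrow> nat \<Rightarrow> bit) \<Rightarrow> nat \<Rightarrow> nat set \<Rightarrow> (nat \<Rightarrow> bit) \<Rightarrow> bool" where
  "solvable_rows G L U b \<longleftrightarrow> (\<exists>d. \<forall>i\<in>U. (\<Sum>j<L. G i j * d j) = b i)"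

lemma sum_lessThan_Suc_fun_upd:
  "(\<Sum>j<Suc L. G i j * (d(L := c)) j) = (\<Sum>j<L. G i j * d j) + G i L * c"
proof -
  have "(\<Sum>j<L. G i j * (d(L := c)) j) = (\<Sum>j<L. G i j * d j)"
    by (rule sum.cong) auto
  then show ?thesis by simp
qed

lemma solvable_rows_Suc:
  "solvable_rows G (Suc L) U b \<longleftrightarrow>
     solvable_rows G L U b \<or> solvable_rows G L U (\<lambda>i. b i + G i L)"
proof
  assume "solvable_rows G (Suc L) U b"
  then obtain d where d: "\<forall>i\<in>U. (\<Sum>j<Suc L. G i j * d j) = b i"
    unfolding solvable_rows_def by blast
  have sum_d: "\<forall>i\<in>U. (\<Sum>j<L. G i j * d j) + G i L * d L = b i"
    using d sum_lessThan_Suc_fun_upd[where d = d and c = "d L"] by simp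
  show "solvable_rows G L U b \<or> solvable_rows G L U (\<lambda>i. b i + G i L)"
  proof (cases "d L = 0")
    case True
    then show ?thesis using sum_d unfolding solvable_rows_def by auto
  next
    case False
    then have "\<forall>i\<in>U. (\<Sum>j<L. G i j * d j) = b i + G i L"
      using sum_d by (simp add: bit_add_eq_iff[THEN iffD1])
    then show ?thesis unfolding solvable_rows_def by blast
  qed
next
  assume "solvable_rows G L U b \<or> solvable_rows G L U (\<lambda>i. b i + G i L)"
  then show "solvable_rows G (Suc L) U b"
  proof
    assume "solvable_rows G L U b"
    then obtain d where "\<forall>i\<in>U. (\<Sum>j<L. G i j * d j) = b i"
      unfolding solvable_rows_def by blast
    then have "\<forall>i\<in>U. (\<Sum>j<Suc L. G i j * (d(L := 0)) j) = b i"
      by (simp add: sum_lessThan_Suc_fun_upd)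
    then show ?thesis
      unfolding solvable_rows_def by blast
  next
    assume "solvable_rows G L U (\<lambda>i. b i + G i L)"
    then obtain d where "\<forall>i\<in>U. (\<Sum>j<L. G i j * d j) = b i + G i L"
      unfolding solvable_rows_def by blast
    then have "\<forall>i\<in>U. (\<Sum>j<Suc L. G i j * (d(L := 1)) j) = b i"
      by (simp add: sum_lessThan_Suc_fun_upd add.assoc)
    then show ?thesis
      unfolding solvable_rows_def by blast
  qed
qed

text \<open>Fredholm alternative over GF(2), by induction on the number of columns: if neither
  \<open>b\<close> nor \<open>b + G\<^sub>L\<close> is reached by the first \<open>L\<close> columns, two separating vectors exist,
  and either one of them or their sum also annihilates column \<open>L\<close>.\<close>

lemma separating_vector_if_not_solvable_rows:
  assumes "finite U" "\<not> solvable_rows G L U b"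
  shows "\<exists>y. (\<forall>j<L. (\<Sum>i\<in>U. y i * G i j) = 0) \<and> (\<Sum>i\<in>U. y i * b i) = 1"
  using assms(2)
proof (induction L arbitrary: b)
  case 0
  then obtain i0 where i0: "i0 \<in> U" "b i0 = 1"
    unfolding solvable_rows_def by auto
  have "(\<Sum>i\<in>U. (if i = i0 then 1 else 0) * b i) = (\<Sum>i\<in>U. if i = i0 then b i else 0)"
    by (rule sum.cong) auto
  also have "\<dots> = 1"
    using i0 assms(1) by simp
  finally show ?case
    by (intro exI[of _ "\<lambda>i. if i = i0 then 1 else 0"]) simp
next
  case (Suc L)
  have "\<not> solvable_rows G L U b" "\<not> solvable_rows G L U (\<lambda>i. b i + G i L)"
    using Suc.prems unfolding solvable_rows_Suc by simp_all
  obtain y1 where y1: "\<forall>j<L. (\<Sum>i\<in>U. y1 i * G i j) = 0" "(\<Sum>i\<in>U. y1 i * b i) = 1"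
    using Suc.IH[OF \<open>\<not> solvable_rows G L U b\<close>] by blast
  obtain y2 where y2: "\<forall>j<L. (\<Sum>i\<in>U. y2 i * G i j) = 0"
    and "(\<Sum>i\<in>U. y2 i * (b i + G i L)) = 1"
    using Suc.IH[OF \<open>\<not> solvable_rows G L U (\<lambda>i. b i + G i L)\<close>] by blast
  then have y2b: "(\<Sum>i\<in>U. y2 i * b i) + (\<Sum>i\<in>U. y2 i * G i L) = 1"
    by (simp add: distrib_left sum.distrib)
  consider "(\<Sum>i\<in>U. y1 i * G i L) = 0" | "(\<Sum>i\<in>U. y2 i * G i L) = 0"
    | "(\<Sum>i\<in>U. y1 i * G i L) = 1" "(\<Sum>i\<in>U. y2 i * G i L) = 1"
    by (cases "\<Sum>i\<in>U. y1 i * G i L"; cases "\<Sum>i\<in>U. y2 i * G i L") simp_all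
  then show ?case
  proof cases
    case 1
    then show ?thesis using y1 by (intro exI[of _ y1]) (auto simp: less_Suc_eq)
  next
    case 2
    then show ?thesis using y2 y2b by (intro exI[of _ y2]) (auto simp: less_Suc_eq)
  next
    case 3
    then have "(\<Sum>i\<in>U. (y1 i + y2 i) * b i) = 1"
      using y1 y2b by (simp add: distrib_right sum.distrib)
    moreover have "\<forall>j<Suc L. (\<Sum>i\<in>U. (y1 i + y2 i) * G i j) = 0"
      using y1 y2 3 by (auto simp: less_Suc_eq distrib_right sum.distrib)
    ultimately show ?thesis
      by (intro exI[of _ "\<lambda>i. y1 i + y2 i"] conjI)
  qed
qed

lemma solvable_rows_iff_orthogonal:
  assumes "finite U"
  shows "solvable_rows G L U b \<longleftrightarrow>
    (\<forall>y. (\<forall>j<L. (\<Sum>i\<in>U. y i * G i j) = 0) \<longrightarrow> (\<Sum>i\<in>U. y i * b i) = 0)"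
proof (intro iffI allI impI)
  fix y assume "solvable_rows G L U b" and y: "\<forall>j<L. (\<Sum>i\<in>U. y i * G i j) = 0"
  then obtain d where d: "\<forall>i\<in>U. (\<Sum>j<L. G i j * d j) = b i"
    unfolding solvable_rows_def by blast
  have "(\<Sum>i\<in>U. y i * b i) = (\<Sum>i\<in>U. y i * (\<Sum>j<L. G i j * d j))"
    using d by (intro sum.cong) simp_all
  also have "\<dots> = (\<Sum>i\<in>U. \<Sum>j<L. y i * G i j * d j)"
    by (simp add: sum_distrib_left mult.assoc)
  also have "\<dots> = (\<Sum>j<L. (\<Sum>i\<in>U. y i * G i j) * d j)"
    by (subst sum.swap) (simp add: sum_distrib_right)
  also have "\<dots> = 0" using y by simp
  finally show "(\<Sum>i\<in>U. y i * b i) = 0" .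
next
  assume orth: "\<forall>y. (\<forall>j<L. (\<Sum>i\<in>U. y i * G i j) = 0) \<longrightarrow> (\<Sum>i\<in>U. y i * b i) = 0"
  show "solvable_rows G L U b"
  proof (rule ccontr)
    assume "\<not> solvable_rows G L U b"
    then obtain y where "\<forall>j<L. (\<Sum>i\<in>U. y i * G i j) = 0" and y_b: "(\<Sum>i\<in>U. y i * b i) = 1"
      using separating_vector_if_not_solvable_rows[OF assms] by blast
    with orth show False by auto
  qed
qed

lemma encodable_iff_solvable_rows:
  "encodable l k G0 G1 m \<omega> \<longleftrightarrow>
     solvable_rows G0 l (defects \<omega>) (\<lambda>i. (\<Sum>j<k. G1 i j * m j) + the (\<omega> i))"
proof
  assume "solvable_rows G0 l (defects \<omega>) (\<lambda>i. (\<Sum>j<k. G1 i j * m j) + the (\<omega> i))"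
  then obtain d where d: "\<forall>i\<in>defects \<omega>. (\<Sum>j<l. G0 i j * d j) = (\<Sum>j<k. G1 i j * m j) + the (\<omega> i)"
    unfolding solvable_rows_def by blast
  define d' where "d' j = (if j < l then d j else 0)" for j
  have "d' \<in> bvecs l" by (simp add: d'_def bvecs_def)
  moreover have "(\<Sum>j<l. G0 i j * d' j) = (\<Sum>j<l. G0 i j * d j)" for i
    by (rule sum.cong) (simp_all add: d'_def)
  ultimately show "encodable l k G0 G1 m \<omega>"
    unfolding encodable_def using d by metis
qed (auto simp: encodable_def solvable_rows_def)

lemma solvable_rows_iff_dual_code:
  assumes U: "U \<subseteq> {..<n}"
  shows "solvable_rows G l U b \<longleftrightarrow>
    (\<forall>x\<in>dual_code n l G. {i. x i \<noteq> 0} \<subseteq> U \<longrightarrow> (\<Sum>i\<in>U. x i * b i) = 0)"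
proof -
  have fin: "finite U" using U finite_subset by blast
  have restrict_sum: "(\<Sum>i<n. G i j * x i) = (\<Sum>i\<in>U. x i * G i j)"
    if "{i. x i \<noteq> 0} \<subseteq> U" for x j
  proof -
    have "(\<Sum>i<n. G i j * x i) = (\<Sum>i\<in>U. G i j * x i)"
      by (rule sum.mono_neutral_right) (use U that in auto)
    then show ?thesis by (simp add: mult.commute)
  qed
  have "(\<forall>y. (\<forall>j<l. (\<Sum>i\<in>U. y i * G i j) = 0) \<longrightarrow> (\<Sum>i\<in>U. y i * b i) = 0) \<longleftrightarrow>
    (\<forall>x\<in>dual_code n l G. {i. x i \<noteq> 0} \<subseteq> U \<longrightarrow> (\<Sum>i\<in>U. x i * b i) = 0)"
  proof (intro iffI ballI allI impI)
    fix x assume "\<forall>y. (\<forall>j<l. (\<Sum>i\<in>U. y i * G i j) = 0) \<longrightarrow> (\<Sum>i\<in>U. y i * b i) = 0"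
      and "x \<in> dual_code n l G" "{i. x i \<noteq> 0} \<subseteq> U"
    then show "(\<Sum>i\<in>U. x i * b i) = 0"
      using restrict_sum by (simp add: dual_code_def)
  next
    fix y assume orth: "\<forall>x\<in>dual_code n l G. {i. x i \<noteq> 0} \<subseteq> U \<longrightarrow> (\<Sum>i\<in>U. x i * b i) = 0"
      and y: "\<forall>j<l. (\<Sum>i\<in>U. y i * G i j) = 0"
    define x where "x i = (if i \<in> U then y i else 0)" for i
    have supp: "{i. x i \<noteq> 0} \<subseteq> U" by (auto simp: x_def)
    have "(\<Sum>i\<in>U. x i * G i j) = (\<Sum>i\<in>U. y i * G i j)" for j
      by (rule sum.cong) (simp_all add: x_def)
    then have "x \<in> dual_code n l G"
      using U y restrict_sum[OF supp] by (auto simp: dual_code_def bvecs_def x_def)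
    then have "(\<Sum>i\<in>U. x i * b i) = 0" using orth supp by blast
    moreover have "(\<Sum>i\<in>U. x i * b i) = (\<Sum>i\<in>U. y i * b i)"
      by (rule sum.cong) (simp_all add: x_def)
    ultimately show "(\<Sum>i\<in>U. y i * b i) = 0" by simp
  qed
  then show ?thesis
    using solvable_rows_iff_orthogonal[OF fin] by simp
qed

lemma finite_bvecs: "finite (bvecs n)"
proof -
  have "bvecs n = {f. \<forall>i. (i \<in> {..<n} \<longrightarrow> f i \<in> (UNIV :: bit set)) \<and> (i \<notin> {..<n} \<longrightarrow> f i = 0)}"
    by (auto simp: bvecs_def)
  also have "finite \<dots>"
    by (rule finite_set_of_finite_funs) simp_all
  finally show ?thesis .
qed

lemma finite_dual_code: "finite (dual_code n l G)"
  using finite_bvecs[of n] by (rule finite_subset[rotated]) (auto simp: dual_code_def)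

lemma support_subset_if_bvecs: "x \<in> bvecs n \<Longrightarrow> {i. x i \<noteq> 0} \<subseteq> {..<n}"
  by (auto simp: bvecs_def simp del: bit_not_zero_iff) (meson not_less)

lemma hweight_eq_card_support: "x \<in> bvecs n \<Longrightarrow> hweight n x = card {i. x i \<noteq> 0}"
  unfolding hweight_def using support_subset_if_bvecs[of x n] by (intro arg_cong[where f = card]) auto

lemma dual_code_add:
  "x \<in> dual_code n l G \<Longrightarrow> y \<in> dual_code n l G \<Longrightarrow> (\<lambda>i. x i + y i) \<in> dual_code n l G"
  by (auto simp: dual_code_def bvecs_def distrib_left sum.distrib)

lemma dmin_le_hweight:
  assumes "x \<in> dual_code n l G" "x \<noteq> (\<lambda>_. 0)"
  shows "dmin n l G \<le> hweight n x"
  unfolding dmin_def using assms finite_dual_code[of n l G] by (intro Min_le) auto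

lemma dmin_le_card_support:
  assumes "x \<in> dual_code n l G" "x \<noteq> (\<lambda>_. 0)"
  shows "dmin n l G \<le> card {i. x i \<noteq> 0}"
  using dmin_le_hweight[OF assms] hweight_eq_card_support assms(1)
  by (simp add: dual_code_def)

lemma dmin_pos:
  assumes "x \<in> dual_code n l G" "x \<noteq> (\<lambda>_. 0)"
  shows "0 < dmin n l G"
proof -
  let ?W = "{hweight n x |x. x \<in> dual_code n l G \<and> x \<noteq> (\<lambda>_. 0)}"
  have "dmin n l G \<in> ?W"
    unfolding dmin_def using assms finite_dual_code[of n l G] by (intro Min_in) auto
  then obtain z where z: "z \<in> dual_code n l G" "z \<noteq> (\<lambda>_. 0)" "dmin n l G = hweight n z"
    by blast
  have "z \<in> bvecs n" using z(1) by (simp add: dual_code_def)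
  then have "finite {i. z i \<noteq> 0}" "{i. z i \<noteq> 0} \<noteq> {}"
    using support_subset_if_bvecs finite_subset z(2) by (blast, auto)
  then show ?thesis
    using z(3) hweight_eq_card_support[OF \<open>z \<in> bvecs n\<close>] by (simp add: card_gt_0_iff)
qed

lemma dual_codeword_inside_unique:
  assumes U: "U \<subseteq> {..<n}" "card U \<le> dmin n l G + (dmin n l G - 1) div 2"
    and x: "x \<in> dual_code n l G" "x \<noteq> (\<lambda>_. 0)" "{i. x i \<noteq> 0} \<subseteq> U"
    and y: "y \<in> dual_code n l G" "y \<noteq> (\<lambda>_. 0)" "{i. y i \<noteq> 0} \<subseteq> U"
  shows "x = y"
proof (rule ccontr)
  assume "x \<noteq> y"
  define z where "z = (\<lambda>i. x i + y i)"
  have "z \<noteq> (\<lambda>_. 0)"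
    using \<open>x \<noteq> y\<close> bit_add_eq_iff[of "x _" "y _" 0] by (auto simp: z_def fun_eq_iff)
  then have z: "z \<in> dual_code n l G" "z \<noteq> (\<lambda>_. 0)"
    using dual_code_add[OF x(1) y(1)] by (simp_all add: z_def)
  define A B C where "A = {i. x i \<noteq> 0}" and "B = {i. y i \<noteq> 0}" and "C = {i. z i \<noteq> 0}"
  have "finite U" using U(1) finite_subset by blast
  then have fin: "finite A" "finite B" "finite (A \<union> B)"
    using x(3) y(3) finite_subset unfolding A_def B_def by auto
  have "C \<subseteq> (A \<union> B) - (A \<inter> B)"
    unfolding A_def B_def C_def z_def
    by (auto simp del: bit_not_zero_iff simp: bit_add_neq_0_iff)
  then have "card C \<le> card (A \<union> B - A \<inter> B)"
    using fin by (intro card_mono) auto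
  also have "\<dots> = card (A \<union> B) - card (A \<inter> B)"
    using fin by (intro card_Diff_subset) auto
  finally have "card C \<le> card (A \<union> B) - card (A \<inter> B)" .
  moreover have "card A + card B = card (A \<union> B) + card (A \<inter> B)"
    using card_Un_Int fin by blast
  moreover have "card (A \<inter> B) \<le> card (A \<union> B)"
    using fin(3) by (rule card_mono) blast
  moreover have "card (A \<union> B) \<le> card U"
    using \<open>finite U\<close> x(3) y(3) unfolding A_def B_def by (intro card_mono) auto
  moreover have "dmin n l G \<le> card A" "dmin n l G \<le> card B" "dmin n l G \<le> card C"
    using dmin_le_card_support x y z unfolding A_def B_def C_def by blast+
  moreover have "0 < dmin n l G" using dmin_pos x by blast
  ultimately show False using U(2) by linarith
qed

definition covers_codeword :: "nat \<Rightarrow> nat \<Rightarrow> (nat \<Rightarrow> nat \<Rightarrow> bit) \<Rightarrow> nat set \<Rightarrow> bool" where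
  "covers_codeword n l G U \<longleftrightarrow> (\<exists>x\<in>dual_code n l G. x \<noteq> (\<lambda>_. 0) \<and> {i. x i \<noteq> 0} \<subseteq> U)"

lemma bij_betw_defects_eq_PiE:
  "bij_betw (\<lambda>\<omega>. restrict (\<lambda>i. the (\<omega> i)) U) {\<omega>. defects \<omega> = U} (U \<rightarrow>\<^sub>E (UNIV :: bit set))"
  by (rule bij_betw_byWitness[where f' = "\<lambda>s i. if i \<in> U then Some (s i) else None"])
    (auto simp: defects_def fun_eq_iff PiE_def extensional_def split: if_splits)

lemma finite_defects_eq: "finite U \<Longrightarrow> finite {\<omega>. defects \<omega> = U}"
  using bij_betw_finite[OF bij_betw_defects_eq_PiE] by (simp add: finite_PiE)

lemma card_defects_eq: "finite U \<Longrightarrow> card {\<omega>. defects \<omega> = U} = 2 ^ card U"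
  using bij_betw_same_card[OF bij_betw_defects_eq_PiE] by (simp add: card_PiE card_UNIV_bit)

lemma card_defects_in:
  assumes "finite \<F>" "\<And>U. U \<in> \<F> \<Longrightarrow> finite U"
  shows "card {\<omega>. defects \<omega> \<in> \<F> \<and> P \<omega>} = (\<Sum>U\<in>\<F>. card {\<omega>. defects \<omega> = U \<and> P \<omega>})"
proof -
  have "{\<omega>. defects \<omega> \<in> \<F> \<and> P \<omega>} = (\<Union>U\<in>\<F>. {\<omega>. defects \<omega> = U \<and> P \<omega>})"
    by blast
  also have "card \<dots> = (\<Sum>U\<in>\<F>. card {\<omega>. defects \<omega> = U \<and> P \<omega>})"
    using assms finite_defects_eq by (intro card_UN_disjoint) auto
  finally show ?thesis .
qed

text \<open>Toggling the stuck-at value at \<open>i\<^sub>0\<close> is an involution on the patterns with defect set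
  \<open>U\<close> that flips the parity, so exactly half of them have parity 1.\<close>

lemma card_defects_eq_parity_1:
  assumes U: "finite U" "i0 \<in> U" and x: "x i0 = 1"
  shows "card {\<omega>. defects \<omega> = U \<and> (\<Sum>i\<in>U. x i * (c i + the (\<omega> i))) = 1} = 2 ^ (card U - 1)"
proof -
  define par where "par \<omega> = (\<Sum>i\<in>U. x i * (c i + the (\<omega> i)))" for \<omega>
  define toggle where "toggle \<omega> = fun_upd \<omega> i0 (Some (the (\<omega> i0) + 1))" for \<omega> :: "nat \<Rightarrow> bit option"
  define P where "P b = {\<omega>. defects \<omega> = U \<and> par \<omega> = b}" for b
  have toggle_defects: "defects (toggle \<omega>) = U" if "defects \<omega> = U" for \<omega>
    using that U(2) by (auto simp: toggle_def defects_def)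
  have toggle_toggle: "toggle (toggle \<omega>) = \<omega>" if "defects \<omega> = U" for \<omega>
    using that U(2) by (auto simp: toggle_def defects_def fun_eq_iff add.assoc)
  have par_toggle: "par (toggle \<omega>) = par \<omega> + 1" for \<omega>
  proof -
    have "par (toggle \<omega>) = (\<Sum>i\<in>U. x i * (c i + the (\<omega> i)) + (if i = i0 then 1 else 0))"
      unfolding par_def by (rule sum.cong) (auto simp: toggle_def x distrib_left add.assoc)
    also have "\<dots> = par \<omega> + 1"
      using U by (simp add: par_def sum.distrib)
    finally show ?thesis .
  qed
  have "bij_betw toggle (P 1) (P 0)"
    by (rule bij_betw_byWitness[where f' = toggle])
      (auto simp: P_def toggle_defects toggle_toggle par_toggle)
  then have "card (P 1) = card (P 0)" by (rule bij_betw_same_card)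
  moreover have "card (P 1) + card (P 0) = 2 ^ card U"
  proof -
    have "finite (P b)" for b
      using finite_defects_eq[OF U(1)] unfolding P_def by simp
    then have "card (P 1) + card (P 0) = card (P 1 \<union> P 0)"
      by (intro card_Un_disjoint[symmetric]) (auto simp: P_def)
    also have "P 1 \<union> P 0 = {\<omega>. defects \<omega> = U}"
      unfolding P_def by auto
    finally show ?thesis
      using card_defects_eq[OF U(1)] by simp
  qed
  moreover have "card U \<noteq> 0" using U by auto
  ultimately have "card (P 1) = 2 ^ (card U - 1)"
    by (cases "card U") simp_all
  then show ?thesis by (simp add: P_def par_def)
qed

lemma encodable_iff_dual_parity:
  assumes "defects \<omega> = U" "U \<subseteq> {..<n}"
  shows "encodable l k G0 G1 m \<omega> \<longleftrightarrow>
    (\<forall>x\<in>dual_code n l G0. {i. x i \<noteq> 0} \<subseteq> U \<longrightarrow>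
       (\<Sum>i\<in>U. x i * ((\<Sum>j<k. G1 i j * m j) + the (\<omega> i))) = 0)"
  unfolding encodable_iff_solvable_rows assms(1) by (rule solvable_rows_iff_dual_code[OF assms(2)])

lemma card_not_encodable_defects_eq:
  assumes U: "U \<subseteq> {..<n}" "card U \<le> dmin n l G0 + (dmin n l G0 - 1) div 2"
  shows "card {\<omega>. defects \<omega> = U \<and> \<not> encodable l k G0 G1 m \<omega>} =
    (if covers_codeword n l G0 U then 2 ^ (card U - 1) else 0)"
proof (cases "covers_codeword n l G0 U")
  case False
  then have zero: "(\<Sum>i\<in>U. x i * b i) = 0"
    if "x \<in> dual_code n l G0" "{i. x i \<noteq> 0} \<subseteq> U" for x b
    using that by (auto simp: covers_codeword_def)
  have "encodable l k G0 G1 m \<omega>" if \<omega>: "defects \<omega> = U" for \<omega>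
    using encodable_iff_dual_parity[of \<omega> U n l k G0 G1 m] \<omega> U(1) zero by simp
  then have "{\<omega>. defects \<omega> = U \<and> \<not> encodable l k G0 G1 m \<omega>} = {}"
    by blast
  then show ?thesis
    unfolding if_not_P[OF False] by (simp only: card.empty)
next
  case True
  then obtain x0 where x0: "x0 \<in> dual_code n l G0" "x0 \<noteq> (\<lambda>_. 0)" "{i. x0 i \<noteq> 0} \<subseteq> U"
    by (auto simp: covers_codeword_def)
  then obtain i0 where "x0 i0 = 1" by (metis bit_not_zero_iff)
  with x0(3) have "i0 \<in> U" by auto
  let ?c = "\<lambda>i. \<Sum>j<k. G1 i j * m j"
  have "{\<omega>. defects \<omega> = U \<and> \<not> encodable l k G0 G1 m \<omega>} =
        {\<omega>. defects \<omega> = U \<and> (\<Sum>i\<in>U. x0 i * (?c i + the (\<omega> i))) = 1}"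
  proof (intro Collect_cong conj_cong refl)
    fix \<omega> assume \<omega>: "defects \<omega> = U"
    have enc: "encodable l k G0 G1 m \<omega> \<longleftrightarrow> (\<forall>x\<in>dual_code n l G0.
        {i. x i \<noteq> 0} \<subseteq> U \<longrightarrow> (\<Sum>i\<in>U. x i * (?c i + the (\<omega> i))) = 0)"
      by (rule encodable_iff_dual_parity[OF \<omega> U(1)])
    show "\<not> encodable l k G0 G1 m \<omega> \<longleftrightarrow> (\<Sum>i\<in>U. x0 i * (?c i + the (\<omega> i))) = 1"
    proof
      assume "\<not> encodable l k G0 G1 m \<omega>"
      then obtain x where x: "x \<in> dual_code n l G0" "{i. x i \<noteq> 0} \<subseteq> U"
        and par: "(\<Sum>i\<in>U. x i * (?c i + the (\<omega> i))) \<noteq> 0"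
        using enc by blast
      then have "x \<noteq> (\<lambda>_. 0)" by auto
      then have "x = x0" using dual_codeword_inside_unique[OF U x(1) _ x(2) x0] by blast
      then show "(\<Sum>i\<in>U. x0 i * (?c i + the (\<omega> i))) = 1" using par by simp
    next
      assume "(\<Sum>i\<in>U. x0 i * (?c i + the (\<omega> i))) = 1"
      then show "\<not> encodable l k G0 G1 m \<omega>" using enc x0(1,3) by auto
    qed
  qed
  moreover have "finite U" using U(1) finite_subset by blast
  ultimately show ?thesis
    using True card_defects_eq_parity_1[of U i0 x0 ?c] \<open>i0 \<in> U\<close> \<open>x0 i0 = 1\<close> by simp
qed

lemma card_supersets_with_card:
  assumes A: "finite A" "S \<subseteq> A" and "card S \<le> u"
  shows "card {U. U \<subseteq> A \<and> card U = u \<and> S \<subseteq> U} = (card A - card S) choose (u - card S)"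
proof -
  have S: "finite S" using A finite_subset by blast
  have "bij_betw (\<lambda>U. U - S) {U. U \<subseteq> A \<and> card U = u \<and> S \<subseteq> U} {V. V \<subseteq> A - S \<and> card V = u - card S}"
  proof (rule bij_betw_byWitness[where f' = "\<lambda>V. V \<union> S"])
    show "(\<lambda>U. U - S) ` {U. U \<subseteq> A \<and> card U = u \<and> S \<subseteq> U} \<subseteq> {V. V \<subseteq> A - S \<and> card V = u - card S}"
      using S by (auto simp: card_Diff_subset)
    show "(\<lambda>V. V \<union> S) ` {V. V \<subseteq> A - S \<and> card V = u - card S} \<subseteq> {U. U \<subseteq> A \<and> card U = u \<and> S \<subseteq> U}"
    proof clarify
      fix V assume V: "V \<subseteq> A - S" "card V = u - card S"
      then have "card (V \<union> S) = card V + card S"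
        using A S finite_subset[of V A] by (intro card_Un_disjoint) auto
      then show "V \<union> S \<subseteq> A \<and> card (V \<union> S) = u \<and> S \<subseteq> V \<union> S"
        using V A \<open>card S \<le> u\<close> by auto
    qed
  qed auto
  then have "card {U. U \<subseteq> A \<and> card U = u \<and> S \<subseteq> U} = card {V. V \<subseteq> A - S \<and> card V = u - card S}"
    by (rule bij_betw_same_card)
  also have "\<dots> = card (A - S) choose (u - card S)"
    using A by (intro n_subsets) simp
  finally show ?thesis
    using A S by (simp add: card_Diff_subset)
qed

text \<open>A \<open>u\<close>-set covers at most one nonzero codeword, so the covering \<open>u\<close>-sets are
  partitioned by the codeword they cover.\<close>

lemma card_covers_codeword:
  assumes ne: "\<exists>x\<in>dual_code n l G. x \<noteq> (\<lambda>_. 0)"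
    and u: "u \<le> dmin n l G + (dmin n l G - 1) div 2"
  shows "card {U. U \<subseteq> {..<n} \<and> card U = u \<and> covers_codeword n l G U}
       = (\<Sum>w = dmin n l G..u. Bw n l G w * ((n - w) choose (u - w)))"
proof -
  define X where "X = {x \<in> dual_code n l G. x \<noteq> (\<lambda>_. 0) \<and> hweight n x \<le> u}"
  define T where "T x = {U. U \<subseteq> {..<n} \<and> card U = u \<and> {i. x i \<noteq> 0} \<subseteq> U}" for x :: "nat \<Rightarrow> bit"
  have X_bvecs: "x \<in> bvecs n" if "x \<in> X" for x
    using that by (simp add: X_def dual_code_def)
  have "{U. U \<subseteq> {..<n} \<and> card U = u \<and> covers_codeword n l G U} = (\<Union>x\<in>X. T x)"
  proof (intro equalityI subsetI)
    fix U assume "U \<in> {U. U \<subseteq> {..<n} \<and> card U = u \<and> covers_codeword n l G U}"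
    then obtain x where U: "U \<subseteq> {..<n}" "card U = u"
      and x: "x \<in> dual_code n l G" "x \<noteq> (\<lambda>_. 0)" "{i. x i \<noteq> 0} \<subseteq> U"
      by (auto simp: covers_codeword_def)
    have "card {i. x i \<noteq> 0} \<le> u"
      using U x(3) finite_subset[OF U(1)] card_mono by blast
    then have "x \<in> X"
      using x hweight_eq_card_support[of x n] by (simp add: X_def dual_code_def)
    moreover have "U \<in> T x" using U x by (simp add: T_def)
    ultimately show "U \<in> (\<Union>x\<in>X. T x)" by blast
  qed (auto simp: X_def T_def covers_codeword_def)
  also have "card (\<Union>x\<in>X. T x) = (\<Sum>x\<in>X. card (T x))"
  proof (rule card_UN_disjoint)
    show "finite X" using finite_dual_code[of n l G] by (simp add: X_def)
    show "\<forall>x\<in>X. finite (T x)"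
      by (auto intro: finite_subset[of _ "Pow {..<n}"] simp: T_def)
    show "\<forall>x\<in>X. \<forall>y\<in>X. x \<noteq> y \<longrightarrow> T x \<inter> T y = {}"
      using dual_codeword_inside_unique[of _ n l G] u by (fastforce simp: X_def T_def)
  qed
  also have "\<dots> = (\<Sum>x\<in>X. (n - hweight n x) choose (u - hweight n x))"
  proof (rule sum.cong[OF refl])
    fix x assume x: "x \<in> X"
    show "card (T x) = (n - hweight n x) choose (u - hweight n x)"
      using card_supersets_with_card[of "{..<n}" "{i. x i \<noteq> 0}" u] x X_bvecs[OF x]
        support_subset_if_bvecs hweight_eq_card_support
      by (simp add: T_def X_def)
  qed
  also have "\<dots> = (\<Sum>w = dmin n l G..u. \<Sum>x\<in>{x \<in> X. hweight n x = w}. (n - w) choose (u - w))"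
    using finite_dual_code[of n l G] dmin_le_hweight
    by (subst sum.group[symmetric, where g = "hweight n"]) (auto simp: X_def)
  also have "\<dots> = (\<Sum>w = dmin n l G..u. Bw n l G w * ((n - w) choose (u - w)))"
  proof (rule sum.cong[OF refl])
    fix w assume "w \<in> {dmin n l G..u}"
    moreover have "0 < dmin n l G" using dmin_pos ne by blast
    ultimately have "{x \<in> X. hweight n x = w} = {x \<in> dual_code n l G. hweight n x = w}"
      by (auto simp: X_def hweight_def)
    then show "(\<Sum>x\<in>{x \<in> X. hweight n x = w}. (n - w) choose (u - w)) = Bw n l G w * ((n - w) choose (u - w))"
      by (simp add: Bw_def)
  qed
  finally show ?thesis .
qed

lemma pmf_cell_pmf:
  assumes "0 \<le> \<beta>" "\<beta> \<le> 1"
  shows "pmf (cell_pmf \<beta>) None = 1 - \<beta>" "pmf (cell_pmf \<beta>) (Some b) = \<beta> / 2"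
proof -
  have "pmf (map_pmf Some (pmf_of_set (UNIV :: bit set))) (Some b) = 1 / 2"
    by (simp add: pmf_map_inj' card_UNIV_bit)
  moreover have "pmf (map_pmf Some (pmf_of_set (UNIV :: bit set))) None = 0"
    by (simp add: pmf_eq_0_set_pmf)
  ultimately show "pmf (cell_pmf \<beta>) None = 1 - \<beta>" "pmf (cell_pmf \<beta>) (Some b) = \<beta> / 2"
    using assms by (simp_all add: cell_pmf_def pmf_bind)
qed

lemma prod_if_mem:
  fixes a b :: "'a :: comm_monoid_mult"
  assumes "finite A" "U \<subseteq> A"
  shows "(\<Prod>i\<in>A. if i \<in> U then a else b) = a ^ card U * b ^ (card A - card U)"
proof -
  have "(\<Prod>i\<in>A. if i \<in> U then a else b) = (\<Prod>i\<in>A \<inter> U. a) * (\<Prod>i\<in>A - U. b)"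
    using assms(1) by (subst prod.If_cases) (simp_all add: Diff_eq)
  also have "A \<inter> U = U" using assms(2) by blast
  finally show ?thesis
    using assms by (simp add: card_Diff_subset finite_subset)
qed

lemma set_pmf_defect_pmf: "\<omega> \<in> set_pmf (defect_pmf n \<beta>) \<Longrightarrow> defects \<omega> \<subseteq> {..<n}"
  using set_Pi_pmf_subset[of "{0..<n}" None "\<lambda>_. cell_pmf \<beta>"]
  by (force simp: defect_pmf_def defects_def)

lemma pmf_defect_pmf:
  assumes "0 \<le> \<beta>" "\<beta> \<le> 1" "defects \<omega> \<subseteq> {..<n}"
  shows "pmf (defect_pmf n \<beta>) \<omega> = (\<beta> / 2) ^ card (defects \<omega>) * (1 - \<beta>) ^ (n - card (defects \<omega>))"
proof -
  have "pmf (defect_pmf n \<beta>) \<omega> = (\<Prod>i\<in>{0..<n}. pmf (cell_pmf \<beta>) (\<omega> i))"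
    using assms(3) unfolding defect_pmf_def by (subst pmf_Pi) (auto simp: defects_def)
  also have "\<dots> = (\<Prod>i\<in>{0..<n}. if i \<in> defects \<omega> then \<beta> / 2 else 1 - \<beta>)"
    by (rule prod.cong) (auto simp: defects_def pmf_cell_pmf[OF assms(1,2)])
  also have "\<dots> = (\<beta> / 2) ^ card (defects \<omega>) * (1 - \<beta>) ^ (n - card (defects \<omega>))"
    using assms(3) by (subst prod_if_mem) auto
  finally show ?thesis .
qed

lemma measure_cond_pmf_uniform:
  assumes T: "finite T" "T \<noteq> {}" "T \<subseteq> S" "set_pmf p \<inter> S \<subseteq> T"
    and c: "0 < c" "\<And>x. x \<in> T \<Longrightarrow> pmf p x = c"
  shows "measure_pmf.prob (cond_pmf p S) A = card (A \<inter> T) / card T"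
proof -
  have T_set_pmf: "T \<subseteq> set_pmf p"
    using c by (auto simp: set_pmf_eq)
  have prob: "measure_pmf.prob p (S \<inter> B) = c * card (B \<inter> T)" for B
  proof -
    have "measure_pmf.prob p (S \<inter> B) = measure_pmf.prob p (S \<inter> B \<inter> set_pmf p)"
      by (simp add: measure_Int_set_pmf)
    also have "S \<inter> B \<inter> set_pmf p = B \<inter> T"
      using T T_set_pmf by blast
    also have "measure_pmf.prob p (B \<inter> T) = (\<Sum>x\<in>B \<inter> T. pmf p x)"
      using T(1) by (simp add: measure_measure_pmf_finite)
    also have "\<dots> = c * card (B \<inter> T)"
      using c(2) by simp
    finally show ?thesis .
  qed
  have S_pos: "0 < measure_pmf.prob p S"
    using prob[of UNIV] c(1) T(1,2) by (simp add: card_gt_0_iff)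
  then have "set_pmf p \<inter> S \<noteq> {}"
    using T(2,3) T_set_pmf by blast
  then have "measure_pmf.prob (cond_pmf p S) A = measure (uniform_measure (measure_pmf p) S) A"
    by (simp add: cond_pmf.rep_eq)
  also have "\<dots> = measure_pmf.prob p (S \<inter> A) / measure_pmf.prob p S"
    using S_pos by (intro measure_uniform_measure) (simp_all add: measure_pmf.emeasure_eq_measure)
  also have "\<dots> = card (A \<inter> T) / card T"
    using prob[of A] prob[of UNIV] c(1) by simp
  finally show ?thesis .
qed

lemma card_defects_of_card:
  "card {\<omega>. defects \<omega> \<subseteq> {..<n} \<and> card (defects \<omega>) = u} = (n choose u) * 2 ^ u"
proof -
  define Subs where "Subs = {U. U \<subseteq> {..<n} \<and> card U = u}"
  have "Subs \<subseteq> Pow {..<n}" by (auto simp: Subs_def)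
  then have Subs: "finite Subs" "\<And>U. U \<in> Subs \<Longrightarrow> finite U"
    using finite_subset[OF _ finite_lessThan] by (blast intro: finite_subset)+
  have "card {\<omega>. defects \<omega> \<subseteq> {..<n} \<and> card (defects \<omega>) = u}
      = card {\<omega>. defects \<omega> \<in> Subs \<and> True}"
    by (simp add: Subs_def)
  also have "\<dots> = (\<Sum>U\<in>Subs. card {\<omega>. defects \<omega> = U \<and> True})"
    by (rule card_defects_in[OF Subs])
  also have "\<dots> = (n choose u) * 2 ^ u"
    using Subs(2) card_defects_eq n_subsets[of "{..<n}" u] unfolding Subs_def by simp
  finally show ?thesis .
qed

lemma card_not_encodable_defects_of_card:
  assumes "\<exists>x\<in>dual_code n l G0. x \<noteq> (\<lambda>_. 0)" "u \<le> dmin n l G0 + (dmin n l G0 - 1) div 2"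
  shows "card {\<omega>. defects \<omega> \<subseteq> {..<n} \<and> card (defects \<omega>) = u \<and> \<not> encodable l k G0 G1 m \<omega>}
    = (\<Sum>w = dmin n l G0..u. Bw n l G0 w * ((n - w) choose (u - w))) * 2 ^ (u - 1)"
proof -
  define Subs where "Subs = {U. U \<subseteq> {..<n} \<and> card U = u}"
  have "Subs \<subseteq> Pow {..<n}" by (auto simp: Subs_def)
  then have Subs: "finite Subs" "\<And>U. U \<in> Subs \<Longrightarrow> finite U"
    using finite_subset[OF _ finite_lessThan] by (blast intro: finite_subset)+
  have "card {\<omega>. defects \<omega> \<subseteq> {..<n} \<and> card (defects \<omega>) = u \<and> \<not> encodable l k G0 G1 m \<omega>}
      = card {\<omega>. defects \<omega> \<in> Subs \<and> \<not> encodable l k G0 G1 m \<omega>}"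
    by (simp add: Subs_def conj_assoc)
  also have "\<dots> = (\<Sum>U\<in>Subs. card {\<omega>. defects \<omega> = U \<and> \<not> encodable l k G0 G1 m \<omega>})"
    by (rule card_defects_in[OF Subs])
  also have "\<dots> = (\<Sum>U\<in>Subs. if covers_codeword n l G0 U then 2 ^ (u - 1) else 0)"
    using card_not_encodable_defects_eq assms(2) by (intro sum.cong) (auto simp: Subs_def)
  also have "\<dots> = card {U \<in> Subs. covers_codeword n l G0 U} * 2 ^ (u - 1)"
    using Subs(1) by (simp add: sum.If_cases Int_def)
  also have "card {U \<in> Subs. covers_codeword n l G0 U}
      = (\<Sum>w = dmin n l G0..u. Bw n l G0 w * ((n - w) choose (u - w)))"
    unfolding Subs_def using card_covers_codeword[OF assms] by (simp add: conj_assoc)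
  finally show ?thesis .
qed

theorem lemma2:
  fixes n l k u :: nat and G0 G1 :: "nat \<Rightarrow> nat \<Rightarrow> bit" and m :: "nat \<Rightarrow> bit" and \<beta> :: real
  assumes "0 < \<beta>" and "\<beta> < 1"
    and "m \<in> bvecs k"
    and "\<exists>x \<in> dual_code n l G0. x \<noteq> (\<lambda>_. 0)"
    and "1 \<le> u" and "u \<le> dmin n l G0 + (dmin n l G0 - 1) div 2" and "u \<le> n"
  shows "measure_pmf.prob (cond_pmf (defect_pmf n \<beta>) {\<omega>. card (defects \<omega>) = u})
            {\<omega>. \<not> encodable l k G0 G1 m \<omega>}
         = 1/2 * (\<Sum>w = dmin n l G0..u. real (Bw n l G0 w) * real ((n - w) choose (u - w)))
             / real (n choose u)"
proof -
  let ?T = "{\<omega>. defects \<omega> \<subseteq> {..<n} \<and> card (defects \<omega>) = u}"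
  let ?N = "\<Sum>w = dmin n l G0..u. Bw n l G0 w * ((n - w) choose (u - w))"
  have card_T: "card ?T = (n choose u) * 2 ^ u"
    by (rule card_defects_of_card)
  have "{\<omega>. \<not> encodable l k G0 G1 m \<omega>} \<inter> ?T
      = {\<omega>. defects \<omega> \<subseteq> {..<n} \<and> card (defects \<omega>) = u \<and> \<not> encodable l k G0 G1 m \<omega>}"
    by blast
  then have card_fail: "card ({\<omega>. \<not> encodable l k G0 G1 m \<omega>} \<inter> ?T) = ?N * 2 ^ (u - 1)"
    using card_not_encodable_defects_of_card[OF assms(4,6), of k G1 m] by simp
  have "measure_pmf.prob (cond_pmf (defect_pmf n \<beta>) {\<omega>. card (defects \<omega>) = u})
      {\<omega>. \<not> encodable l k G0 G1 m \<omega>} = card ({\<omega>. \<not> encodable l k G0 G1 m \<omega>} \<inter> ?T) / card ?T"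
  proof (rule measure_cond_pmf_uniform)
    have T_pos: "0 < card ?T" using card_T assms(7) by simp
    then show "finite ?T" by (rule card_ge_0_finite)
    show "?T \<noteq> {}" using T_pos by (intro notI) simp
    show "set_pmf (defect_pmf n \<beta>) \<inter> {\<omega>. card (defects \<omega>) = u} \<subseteq> ?T"
      using set_pmf_defect_pmf[of _ n \<beta>] by auto
    show "pmf (defect_pmf n \<beta>) \<omega> = (\<beta> / 2) ^ u * (1 - \<beta>) ^ (n - u)" if "\<omega> \<in> ?T" for \<omega>
      using that pmf_defect_pmf[of \<beta> \<omega> n] assms(1,2) by simp
  qed (use assms(1,2) in auto)
  also have "\<dots> = 1/2 * real ?N / real (n choose u)"
  proof -
    have "(2::nat) ^ u = 2 * 2 ^ (u - 1)"
      using assms(5) by (simp flip: power_Suc)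
    then show ?thesis by (simp add: card_T card_fail)
  qed
  finally show ?thesis by simp
qed

end
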